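(* Let $\mathrm{E}$ be a law of the form $\mathrm{x}\simeq\mathrm{x}\diamond f(\mathrm{x},\mathrm{y},\mathrm{z})$, for some word $f$ in the variables $\mathrm{x},\mathrm{y},\mathrm{z}$, which implies the law $\mathrm{x}\diamond\mathrm{y}\simeq(\mathrm{x}\diamond\mathrm{y})\diamond\mathrm{y}$. Let $w\in M_X$ be irreducible and $w'\in M_X$ with $w\sim_{\mathrm{E}}w'$. (i) If $w=w_1\diamond w_2$, then $w'=(\cdots((w_1'\diamond w_2')\diamond v_1)\diamond\cdots)\diamond v_n$ for some $n\ge0$, words $w_1'\sim_{\mathrm{E}}w_1$, $w_2'\sim_{\mathrm{E}}w_2$, and words $v_1,\dots,v_n$ such that for each $0\le i<n$ there are words $x_i,y_i,z_i$ with $v_{i+1}\sim_{\mathrm{E}}f(x_i,y_i,z_i)$ and $x_i\sim_{\mathrm{E}}(\cdots((w_1'\diamond w_2')\diamond v_1)\diamond\cdots)\diamond v_i$ (in particular $v_{i+1}\to_{\mathrm{E}}x_i$). (ii) If $w\in X$ is a letter, then $w'=(\cdots(w\diamond v_1)\diamond\cdots)\diamond v_n$ for some $n\ge0$ and words $v_1,\dots,v_n$ such that for each $0\le i<n$ there are words $x_i,y_i,z_i$ with $v_{i+1}\sim_{\mathrm{E}}f(x_i,y_i,z_i)$ and $x_i\sim_{\mathrm{E}}(\cdots(w\diamond v_1)\diamond\cdots)\diamond v_i$. Conversely, every word of the form described in (i) (respectively (ii)) is $\sim_{\mathrm{E}}$-equivalent to $w$.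
   Context: $M_X$ is the set of words of the free magma on an alphabet $X$. For words $u,u'$, $u\sim_{\mathrm{E}}u'$ means the law $u\simeq u'$ is a consequence of $\mathrm{E}$ (holds in every magma satisfying $\mathrm{E}$). $f(x,y,z)$ denotes the word obtained from $f$ by substituting words $x,y,z$ for $\mathrm{x},\mathrm{y},\mathrm{z}$. Define the relation $u'\to_{\mathrm{E}}u$ (on words) to mean $u\sim_{\mathrm{E}}u''\diamond u'$ for some word $u''$; given that $\mathrm{E}$ implies $\mathrm{x}\diamond\mathrm{y}\simeq(\mathrm{x}\diamond\mathrm{y})\diamond\mathrm{y}$, this is equivalent to $u\sim_{\mathrm{E}}u\diamond u'$. A word $w$ is irreducible if it is not of the form $w_1\diamond w_2$ with $w_2\to_{\mathrm{E}}w_1$. *)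

theory Defs
  imports Main
begin

datatype 'v word = Var 'v | Op "'v word" "'v word"

datatype var3 = Vx | Vy | Vz

fun subst3 :: "var3 word \<Rightarrow> 'v word \<Rightarrow> 'v word \<Rightarrow> 'v word \<Rightarrow> 'v word" where
  "subst3 (Var Vx) x y z = x"
| "subst3 (Var Vy) x y z = y"
| "subst3 (Var Vz) x y z = z"
| "subst3 (Op a b) x y z = Op (subst3 a x y z) (subst3 b x y z)"

fun eval :: "('c \<Rightarrow> 'c \<Rightarrow> 'c) \<Rightarrow> ('v \<Rightarrow> 'c) \<Rightarrow> 'v word \<Rightarrow> 'c" where
  "eval op env (Var a) = env a"
| "eval op env (Op u v) = op (eval op env u) (eval op env v)"

definition satisfiesE :: "'c set \<Rightarrow> ('c \<Rightarrow> 'c \<Rightarrow> 'c) \<Rightarrow> var3 word \<Rightarrow> bool" where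
  "satisfiesE C op f \<longleftrightarrow> (\<forall>a\<in>C. \<forall>b\<in>C. op a b \<in> C) \<and>
     (\<forall>env. range env \<subseteq> C \<longrightarrow> env Vx = op (env Vx) (eval op env f))"

text \<open>Magmas are taken with carriers inside the type ('v word set), which is
  large enough to contain a copy of the relatively free magma on 'v, so
  this coincides with holding in all magmas satisfying E.\<close>
definition equivE :: "var3 word \<Rightarrow> 'v word \<Rightarrow> 'v word \<Rightarrow> bool" where
  "equivE f u u' \<longleftrightarrow>
     (\<forall>(C :: 'v word set set) op. satisfiesE C op f \<longrightarrow>
        (\<forall>env. range env \<subseteq> C \<longrightarrow> eval op env u = eval op env u'))"

definition arrowE :: "var3 word \<Rightarrow> 'v word \<Rightarrow> 'v word \<Rightarrow> bool" where
  "arrowE f u' u \<longleftrightarrow> (\<exists>u''. equivE f u (Op u'' u'))"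

definition irreducibleE :: "var3 word \<Rightarrow> 'v word \<Rightarrow> bool" where
  "irreducibleE f w \<longleftrightarrow> \<not> (\<exists>w1 w2. w = Op w1 w2 \<and> arrowE f w2 w1)"

definition iter_prod :: "'v word \<Rightarrow> 'v word list \<Rightarrow> 'v word" where
  "iter_prod w0 vs = foldl Op w0 vs"

definition admissible :: "var3 word \<Rightarrow> 'v word \<Rightarrow> 'v word list \<Rightarrow> bool" where
  "admissible f w0 vs \<longleftrightarrow>
     (\<forall>i < length vs. \<exists>x y z. equivE f (vs ! i) (subst3 f x y z) \<and>
                               equivE f x (iter_prod w0 (take i vs)))"

end

theory Submission
  imports Defs
begin

text \<open>By Birkhoff's completeness theorem, \<open>u \<sim>\<^sub>E u'\<close> holds iff \<open>u'\<close> is reached from \<open>u\<close>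
  by rewriting subwords \<open>s \<mapsto> s \<diamond> f(s,y,z)\<close> in either direction.  Call a tower over a set
  of base words any word obtained from a base word by repeatedly multiplying on the right
  with some \<open>v \<sim>\<^sub>E f(x,y,z)\<close>, where \<open>x\<close> is \<open>\<sim>\<^sub>E\<close> the word built so far.  Towers are closed under
  rewriting as soon as every rewrite of a base word is a tower.  For \<open>w = w\<^sub>1 \<diamond> w\<^sub>2\<close> take as
  base the words \<open>w\<^sub>1' \<diamond> w\<^sub>2'\<close> with \<open>w\<^sub>i' \<sim>\<^sub>E w\<^sub>i\<close>: inner rewrites stay in the base, outer
  forward rewrites give towers, and an outer backward rewrite \<open>w\<^sub>1' \<diamond> w\<^sub>2' \<mapsto> w\<^sub>1'\<close> would give
  \<open>w\<^sub>1 \<sim>\<^sub>E w\<^sub>1 \<diamond> w\<^sub>2\<close>, i.e. \<open>w\<^sub>2 \<rightarrow>\<^sub>E w\<^sub>1\<close>, contradicting irreducibility.  So the \<open>\<sim>\<^sub>E\<close>-class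
  of \<open>w\<close> consists exactly of the towers.  For a letter the base is \<open>{w}\<close>.\<close>

lemma equivE_refl: "equivE f u u"
  unfolding equivE_def by auto

lemma equivE_sym: "equivE f u v \<Longrightarrow> equivE f v u"
  unfolding equivE_def by metis

lemma equivE_trans [trans]: "equivE f u v \<Longrightarrow> equivE f v t \<Longrightarrow> equivE f u t"
  unfolding equivE_def by metis

lemma equivE_Op: "equivE f a a' \<Longrightarrow> equivE f b b' \<Longrightarrow> equivE f (Op a b) (Op a' b')"
  unfolding equivE_def by simp

lemma eval_closed:
  "\<forall>a\<in>C. \<forall>b\<in>C. op a b \<in> C \<Longrightarrow> range env \<subseteq> C \<Longrightarrow> eval op env u \<in> C"
  by (induction u) auto

lemma eval_subst3:
  "eval op env (subst3 t x y z) =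
     eval op (case_var3 (eval op env x) (eval op env y) (eval op env z)) t"
proof (induction t)
  case (Var v)
  then show ?case by (cases v) auto
qed auto

lemma equivE_law:
  fixes x y z :: "'v word"
  shows "equivE f x (Op x (subst3 f x y z))"
  unfolding equivE_def
proof (intro allI impI)
  fix C :: "'v word set set" and op and env :: "'v \<Rightarrow> 'v word set"
  assume sat: "satisfiesE C op f" and env: "range env \<subseteq> C"
  let ?env = "case_var3 (eval op env x) (eval op env y) (eval op env z)"
  have "\<forall>a\<in>C. \<forall>b\<in>C. op a b \<in> C"
    using sat unfolding satisfiesE_def by blast
  then have "range ?env \<subseteq> C"
    using eval_closed[OF _ env] by (auto split: var3.splits)
  then have "?env Vx = op (?env Vx) (eval op ?env f)"
    using sat unfolding satisfiesE_def by blast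
  then show "eval op env x = eval op env (Op x (subst3 f x y z))"
    by (simp add: eval_subst3)
qed

inductive E_step :: "var3 word \<Rightarrow> 'v word \<Rightarrow> 'v word \<Rightarrow> bool" for f where
  root: "E_step f s (Op s (subst3 f s y z))"
| left: "E_step f a a' \<Longrightarrow> E_step f (Op a b) (Op a' b)"
| right: "E_step f b b' \<Longrightarrow> E_step f (Op a b) (Op a b')"

lemma E_step_sound: "E_step f u v \<Longrightarrow> equivE f u v"
  by (induction rule: E_step.induct) (auto intro: equivE_law equivE_Op equivE_refl)

lemma symclp_E_step_sound: "symclp (E_step f) u v \<Longrightarrow> equivE f u v"
  by (auto elim!: symclpE dest: E_step_sound equivE_sym)

lemma equivclp_E_step_Op:
  assumes "equivclp (E_step f) a a'" and "equivclp (E_step f) b b'"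
  shows "equivclp (E_step f) (Op a b) (Op a' b')"
proof -
  have "equivclp (E_step f) (Op a b) (Op a' b)"
    using assms(1) by (induction rule: equivclp_induct)
      (auto intro: equivclp_into_equivclp E_step.left)
  also have "equivclp (E_step f) (Op a' b) (Op a' b')"
    using assms(2) by (induction rule: equivclp_induct)
      (auto intro: equivclp_into_equivclp E_step.right)
  finally show ?thesis .
qed

text \<open>Completeness is shown in the term model: the classes of \<open>equivclp (E_step f)\<close> form a
  magma satisfying E in which every word evaluates to its own class.\<close>

definition E_class :: "var3 word \<Rightarrow> 'v word \<Rightarrow> 'v word set" where
  "E_class f t = Collect (equivclp (E_step f) t)"

definition E_class_op :: "var3 word \<Rightarrow> 'v word set \<Rightarrow> 'v word set \<Rightarrow> 'v word set" where
  "E_class_op f A B = E_class f (Op (SOME a. a \<in> A) (SOME b. b \<in> B))"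

lemma E_class_eq_iff: "E_class f a = E_class f b \<longleftrightarrow> equivclp (E_step f) a b"
proof
  assume "E_class f a = E_class f b"
  then have "b \<in> E_class f a" by (simp add: E_class_def)
  then show "equivclp (E_step f) a b" by (simp add: E_class_def)
next
  assume "equivclp (E_step f) a b"
  then show "E_class f a = E_class f b"
    unfolding E_class_def by (auto intro: equivclp_trans dest: equivclp_sym)
qed

lemma E_class_op_E_class: "E_class_op f (E_class f a) (E_class f b) = E_class f (Op a b)"
proof -
  have some_in_class: "equivclp (E_step f) t (SOME t'. t' \<in> E_class f t)" for t
    using someI[of "\<lambda>t'. t' \<in> E_class f t" t] by (simp add: E_class_def)
  have "equivclp (E_step f) (Op a b) (Op (SOME a'. a' \<in> E_class f a) (SOME b'. b' \<in> E_class f b))"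
    by (rule equivclp_E_step_Op[OF some_in_class some_in_class])
  then show ?thesis
    unfolding E_class_op_def E_class_eq_iff by (rule equivclp_sym)
qed

lemma eval_E_class_subst3:
  "eval (E_class_op f) (\<lambda>v. E_class f (g v)) t = E_class f (subst3 t (g Vx) (g Vy) (g Vz))"
proof (induction t)
  case (Var x)
  then show ?case by (cases x) auto
qed (simp add: E_class_op_E_class)

lemma eval_E_class: "eval (E_class_op f) (\<lambda>a. E_class f (Var a)) t = E_class f t"
  by (induction t) (auto simp: E_class_op_E_class)

lemma satisfiesE_E_class:
  "satisfiesE (range (E_class f :: 'v word \<Rightarrow> 'v word set)) (E_class_op f) f"
  unfolding satisfiesE_def
proof (intro conjI allI impI ballI)
  fix A B :: "'v word set" assume "A \<in> range (E_class f)" "B \<in> range (E_class f)"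
  then show "E_class_op f A B \<in> range (E_class f)"
    by (auto simp: E_class_op_E_class)
next
  fix env :: "var3 \<Rightarrow> 'v word set" assume "range env \<subseteq> range (E_class f)"
  then have "\<forall>v. \<exists>t. env v = E_class f t" by blast
  then obtain g where "env v = E_class f (g v)" for v by metis
  then have env: "env = (\<lambda>v. E_class f (g v))" by (simp add: fun_eq_iff)
  have "equivclp (E_step f) (g Vx) (Op (g Vx) (subst3 f (g Vx) (g Vy) (g Vz)))"
    by (rule r_into_equivclp) (rule E_step.root)
  then show "env Vx = E_class_op f (env Vx) (eval (E_class_op f) env f)"
    unfolding env eval_E_class_subst3 E_class_op_E_class E_class_eq_iff .
qed

lemma equivE_imp_equivclp_E_step:
  fixes u v :: "'v word"
  assumes "equivE f u v"
  shows "equivclp (E_step f) u v"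
proof -
  have "range (\<lambda>a. E_class f (Var a)) \<subseteq> range (E_class f)" by auto
  with satisfiesE_E_class
  have "eval (E_class_op f) (\<lambda>a. E_class f (Var a)) u = eval (E_class_op f) (\<lambda>a. E_class f (Var a)) v"
    using assms unfolding equivE_def by (elim allE impE) assumption+
  then show ?thesis
    unfolding eval_E_class E_class_eq_iff .
qed

lemma symclp_E_step_VarE:
  assumes "symclp (E_step f) (Var a) t"
  obtains y z where "t = Op (Var a) (subst3 f (Var a) y z)"
  using assms by (auto simp: symclp_def elim: E_step.cases)

lemma symclp_E_step_OpE:
  assumes "symclp (E_step f) (Op u v) t"
  obtains (root) y z where "t = Op (Op u v) (subst3 f (Op u v) y z)"
  | (unroot) y z where "t = u" and "v = subst3 f u y z"
  | (left) u' where "t = Op u' v" and "symclp (E_step f) u u'"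
  | (right) v' where "t = Op u v'" and "symclp (E_step f) v v'"
proof -
  from assms consider "E_step f (Op u v) t" | "E_step f t (Op u v)"
    unfolding symclp_def by blast
  then show thesis
  proof cases
    case 1
    then show thesis by cases (auto intro: that)
  next
    case 2
    then show thesis by cases (auto intro: that)
  qed
qed

inductive tower :: "var3 word \<Rightarrow> ('v word \<Rightarrow> bool) \<Rightarrow> 'v word \<Rightarrow> bool" for f Base where
  base: "Base u \<Longrightarrow> tower f Base u"
| snoc: "tower f Base u \<Longrightarrow> equivE f v (subst3 f x y z) \<Longrightarrow> equivE f x u \<Longrightarrow>
    tower f Base (Op u v)"

lemma admissible_snoc:
  "admissible f B (vs @ [v]) \<longleftrightarrow> admissible f B vs \<and>
     (\<exists>x y z. equivE f v (subst3 f x y z) \<and> equivE f x (iter_prod B vs))"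
  unfolding admissible_def by (auto simp: nth_append less_Suc_eq)

lemma tower_iff:
  "tower f Base u \<longleftrightarrow> (\<exists>B vs. Base B \<and> u = iter_prod B vs \<and> admissible f B vs)"
proof
  show "tower f Base u \<Longrightarrow> \<exists>B vs. Base B \<and> u = iter_prod B vs \<and> admissible f B vs"
  proof (induction rule: tower.induct)
    case (base u)
    then show ?case
      by (intro exI[of _ u] exI[of _ "[]"]) (simp add: iter_prod_def admissible_def)
  next
    case (snoc u v x y z)
    then obtain B vs where "Base B" "u = iter_prod B vs" "admissible f B vs" by blast
    with snoc.hyps show ?case
      by (intro exI[of _ B] exI[of _ "vs @ [v]"]) (auto simp: admissible_snoc iter_prod_def)
  qed
next
  have "tower f Base (iter_prod B vs)" if "Base B" "admissible f B vs" for B vs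
    using that(2)
  proof (induction vs rule: rev_induct)
    case Nil
    then show ?case using that(1) by (simp add: iter_prod_def tower.base)
  next
    case (snoc v vs)
    then show ?case by (auto simp: admissible_snoc iter_prod_def intro: tower.snoc)
  qed
  then show "\<exists>B vs. Base B \<and> u = iter_prod B vs \<and> admissible f B vs \<Longrightarrow> tower f Base u"
    by blast
qed

lemma tower_equivE:
  assumes "tower f Base u" and base_equivE: "\<And>u. Base u \<Longrightarrow> equivE f u w"
  shows "equivE f u w"
  using assms(1)
proof (induction rule: tower.induct)
  case (base u)
  then show ?case by (rule base_equivE)
next
  case (snoc u v x y z)
  have "equivE f (Op u v) (Op x (subst3 f x y z))"
    using snoc.hyps by (blast intro: equivE_Op equivE_sym)
  also have "equivE f \<dots> x"
    by (rule equivE_sym[OF equivE_law])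
  also have "equivE f x w"
    using snoc.hyps snoc.IH by (blast intro: equivE_trans)
  finally show ?case .
qed

lemma tower_symclp_E_step:
  assumes "tower f Base u" and "symclp (E_step f) u t"
    and base_steps: "\<And>u t. Base u \<Longrightarrow> symclp (E_step f) u t \<Longrightarrow> tower f Base t"
  shows "tower f Base t"
  using assms(1,2)
proof (induction u arbitrary: t rule: tower.induct)
  case (base u)
  then show ?case by (rule base_steps)
next
  case (snoc u v x y z)
  from snoc.prems show ?case
  proof (cases rule: symclp_E_step_OpE)
    case root
    then show ?thesis
      by (auto intro: tower.snoc snoc.hyps equivE_refl)
  next
    case unroot
    then show ?thesis using snoc.hyps by simp
  next
    case (left u')
    moreover have "equivE f x u'"
      using snoc.hyps left by (blast intro: equivE_trans symclp_E_step_sound)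
    ultimately show ?thesis
      using snoc.hyps snoc.IH by (auto intro: tower.snoc)
  next
    case (right v')
    moreover have "equivE f v' (subst3 f x y z)"
      using snoc.hyps right by (blast intro: equivE_trans equivE_sym symclp_E_step_sound)
    ultimately show ?thesis
      using snoc.hyps by (auto intro: tower.snoc)
  qed
qed

lemma equivE_iff_tower:
  assumes "Base w"
    and base_equivE: "\<And>u. Base u \<Longrightarrow> equivE f u w"
    and base_steps: "\<And>u t. Base u \<Longrightarrow> symclp (E_step f) u t \<Longrightarrow> tower f Base t"
  shows "equivE f w w' \<longleftrightarrow> tower f Base w'"
proof
  assume "equivE f w w'"
  then have "equivclp (E_step f) w w'"
    by (rule equivE_imp_equivclp_E_step)
  then show "tower f Base w'"
  proof (induction rule: equivclp_induct)
    case base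
    show ?case using \<open>Base w\<close> by (rule tower.base)
  next
    case (step y z)
    from step.hyps(2) have "symclp (E_step f) y z"
      unfolding symclp_def .
    with step.IH show ?case
      using base_steps by (rule tower_symclp_E_step)
  qed
next
  assume "tower f Base w'"
  then have "equivE f w' w"
    using base_equivE by (rule tower_equivE)
  then show "equivE f w w'"
    by (rule equivE_sym)
qed

lemma letter_steps_tower:
  assumes "symclp (E_step f) (Var a) t"
  shows "tower f (\<lambda>u. u = Var a) t"
  using assms
  by (auto elim!: symclp_E_step_VarE intro: tower.snoc tower.base equivE_refl)

lemma irreducible_steps_tower:
  assumes irr: "irreducibleE f (Op w1 w2)"
    and u1: "equivE f u1 w1" and u2: "equivE f u2 w2"
    and "symclp (E_step f) (Op u1 u2) t"
  shows "tower f (\<lambda>u. \<exists>u1 u2. u = Op u1 u2 \<and> equivE f u1 w1 \<and> equivE f u2 w2) t"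
  using assms(4)
proof (cases rule: symclp_E_step_OpE)
  case root
  then show ?thesis
    using u1 u2 by (auto intro: tower.snoc tower.base equivE_refl)
next
  case (unroot y z)
  have "equivE f w1 u1" by (rule equivE_sym[OF u1])
  also have "equivE f u1 (Op u1 u2)"
    using unroot equivE_law by simp
  also have "equivE f (Op u1 u2) (Op w1 w2)"
    using u1 u2 by (rule equivE_Op)
  finally have "arrowE f w2 w1"
    unfolding arrowE_def by blast
  with irr show ?thesis
    unfolding irreducibleE_def by blast
next
  case left
  then show ?thesis
    using u1 u2 by (blast intro: tower.base equivE_trans equivE_sym symclp_E_step_sound)
next
  case right
  then show ?thesis
    using u1 u2 by (blast intro: tower.base equivE_trans equivE_sym symclp_E_step_sound)
qed

theorem mainTheorem11:
  fixes f :: "var3 word" and w w' :: "'v word"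
  assumes hE: "equivE f (Op (Var Vx) (Var Vy)) (Op (Op (Var Vx) (Var Vy)) (Var Vy))"
    and hw: "irreducibleE f w"
  shows "(\<forall>w1 w2. w = Op w1 w2 \<longrightarrow>
            (equivE f w w' \<longleftrightarrow>
              (\<exists>w1' w2' vs. w' = iter_prod (Op w1' w2') vs \<and>
                 equivE f w1' w1 \<and> equivE f w2' w2 \<and> admissible f (Op w1' w2') vs)))
       \<and> (\<forall>a. w = Var a \<longrightarrow>
            (equivE f w w' \<longleftrightarrow>
              (\<exists>vs. w' = iter_prod w vs \<and> admissible f w vs)))"
proof (intro conjI allI impI)
  fix w1 w2 assume w: "w = Op w1 w2"
  have "equivE f w w' \<longleftrightarrow>
      tower f (\<lambda>u. \<exists>u1 u2. u = Op u1 u2 \<and> equivE f u1 w1 \<and> equivE f u2 w2) w'"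
    using hw unfolding w
    by (intro equivE_iff_tower)
       (auto intro: equivE_refl equivE_Op irreducible_steps_tower)
  then show "equivE f w w' \<longleftrightarrow>
      (\<exists>w1' w2' vs. w' = iter_prod (Op w1' w2') vs \<and>
         equivE f w1' w1 \<and> equivE f w2' w2 \<and> admissible f (Op w1' w2') vs)"
    unfolding tower_iff by blast
next
  fix a assume w: "w = Var a"
  have "equivE f w w' \<longleftrightarrow> tower f (\<lambda>u. u = Var a) w'"
    unfolding w
    by (intro equivE_iff_tower) (auto intro: equivE_refl letter_steps_tower)
  then show "equivE f w w' \<longleftrightarrow> (\<exists>vs. w' = iter_prod w vs \<and> admissible f w vs)"
    unfolding tower_iff w by blast
qed

end
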